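(* Let $N\ge1$, $K\ge1$, $n_v\ge0$. For a row-stochastic matrix $\mathbf{T}\in[0,1]^{K\times K}$ let $\mathbf{P}_{\mathbf{T}}\in[0,1]^{K^N\times K^N}$ denote the associated global transition matrix. Then the map $\mathbf{T}\mapsto\mathbf{P}_{\mathbf{T}}$, restricted to irreducible aperiodic row-stochastic matrices $\mathbf{T}$, is one-to-one. Furthermore, for such $\mathbf{T}$, let $\pi$ be the unique invariant measure of $\mathbf{P}_{\mathbf{T}}$, let $\tilde\pi$ be the unique invariant measure of $\mathbf{T}$, and for $n\in[N]$ let $\pi_n$ be the $n$-th marginal of $\pi$, i.e. $\pi_n(k)=\lim_{t\to\infty}\mathbb{P}(X_n(t)=k)$ for $k\in[K]$, where $X(\cdot)$ is the Markov chain with transition matrix $\mathbf{P}_{\mathbf{T}}$. Then $\pi_n=\tilde\pi$ for every $n\in[N]$.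
   Context: Vertices $[N]=\{1,\dots,N\}$ are arranged on a cycle; for $n\in[N]$, $V_n\subset[N]$ is the set of residues modulo $N$ of $n-n_v,\dots,n+n_v$, and $|V_n|$ its cardinality. The global transition matrix is $\mathbf{P}_{\mathbf{T}}(x,y)=\prod_{n=1}^N \frac{1}{|V_n|}\sum_{i\in V_n}\mathbf{T}_{x_i,y_n}$ for $x,y\in[K]^N$ (the transition matrix of the probabilistic cellular automaton with local transition matrix $\mathbf{T}$). *)

theory Defs
  imports "HOL-Library.FuncSet" Complex_Main
begin

definition config_space :: "nat \<Rightarrow> nat \<Rightarrow> (nat \<Rightarrow> nat) set" where
  "config_space N K = PiE {1..N} (\<lambda>_. {1..K})"

text \<open>V_n: residues (represented in {1..N}) of n - nv, ..., n + nv modulo N.\<close>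
definition nbhd :: "nat \<Rightarrow> nat \<Rightarrow> nat \<Rightarrow> nat set" where
  "nbhd N nv n = {nat (((int n + j - 1) mod int N) + 1) | j. - int nv \<le> j \<and> j \<le> int nv}"

definition global_trans ::
  "nat \<Rightarrow> nat \<Rightarrow> (nat \<Rightarrow> nat \<Rightarrow> real) \<Rightarrow> (nat \<Rightarrow> nat) \<Rightarrow> (nat \<Rightarrow> nat) \<Rightarrow> real" where
  "global_trans N nv T x y =
     (\<Prod>n\<in>{1..N}. (1 / real (card (nbhd N nv n))) * (\<Sum>i\<in>nbhd N nv n. T (x i) (y n)))"

definition row_stochastic :: "nat \<Rightarrow> (nat \<Rightarrow> nat \<Rightarrow> real) \<Rightarrow> bool" where
  "row_stochastic K T \<longleftrightarrow>
     (\<forall>i\<in>{1..K}. \<forall>j\<in>{1..K}. 0 \<le> T i j \<and> T i j \<le> 1) \<and>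
     (\<forall>i\<in>{1..K}. (\<Sum>j\<in>{1..K}. T i j) = 1)"

fun mat_pow :: "nat \<Rightarrow> (nat \<Rightarrow> nat \<Rightarrow> real) \<Rightarrow> nat \<Rightarrow> nat \<Rightarrow> nat \<Rightarrow> real" where
  "mat_pow K T 0 = (\<lambda>i j. if i = j then 1 else 0)"
| "mat_pow K T (Suc m) = (\<lambda>i j. \<Sum>k\<in>{1..K}. mat_pow K T m i k * T k j)"

definition irreducible_mat :: "nat \<Rightarrow> (nat \<Rightarrow> nat \<Rightarrow> real) \<Rightarrow> bool" where
  "irreducible_mat K T \<longleftrightarrow> (\<forall>i\<in>{1..K}. \<forall>j\<in>{1..K}. \<exists>m. mat_pow K T m i j > 0)"

definition period_of :: "nat \<Rightarrow> (nat \<Rightarrow> nat \<Rightarrow> real) \<Rightarrow> nat \<Rightarrow> nat" where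
  "period_of K T i = Gcd {m. m > 0 \<and> mat_pow K T m i i > 0}"

definition aperiodic_mat :: "nat \<Rightarrow> (nat \<Rightarrow> nat \<Rightarrow> real) \<Rightarrow> bool" where
  "aperiodic_mat K T \<longleftrightarrow> (\<forall>i\<in>{1..K}. period_of K T i = 1)"

definition invariant_measure :: "'s set \<Rightarrow> ('s \<Rightarrow> 's \<Rightarrow> real) \<Rightarrow> ('s \<Rightarrow> real) \<Rightarrow> bool" where
  "invariant_measure S P \<mu> \<longleftrightarrow>
     (\<forall>x. x \<notin> S \<longrightarrow> \<mu> x = 0) \<and> (\<forall>x\<in>S. 0 \<le> \<mu> x) \<and> (\<Sum>x\<in>S. \<mu> x) = 1 \<and>
     (\<forall>y\<in>S. (\<Sum>x\<in>S. \<mu> x * P x y) = \<mu> y)"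

definition marginal :: "nat \<Rightarrow> nat \<Rightarrow> ((nat \<Rightarrow> nat) \<Rightarrow> real) \<Rightarrow> nat \<Rightarrow> nat \<Rightarrow> real" where
  "marginal N K \<pi> n k = (\<Sum>x\<in>{x\<in>config_space N K. x n = k}. \<pi> x)"

end

theory Submission
  imports Defs
begin

text \<open>If some power \<open>T\<^sup>m\<close> is entrywise positive, then \<open>T\<^sup>m\<close> strictly contracts the
  \<open>\<ell>\<^sup>1\<close>-norm of vectors with sum zero (Dobrushin), which yields existence and uniqueness of the
  invariant measure. Irreducibility and aperiodicity provide such an \<open>m\<close>, because the return
  times to a state form an additive semigroup with gcd 1. The global kernel dominates
  \<open>c \<cdot> \<Prod>\<^sub>n T(x\<^sub>n, y\<^sub>n)\<close> for some \<open>c > 0\<close>, so a power of \<open>P\<^sub>T\<close> is positive as well.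

  Summing \<open>P\<^sub>T(x, \<cdot>)\<close> over the states of all sites but \<open>n\<close> leaves the local kernel of site \<open>n\<close>;
  started from a constant configuration this is a row of \<open>T\<close>, whence injectivity. For an
  invariant \<open>\<pi>\<close> the same marginalisation shows that \<open>\<pi>\<^sub>n\<close> is the average of \<open>\<pi>\<^sub>i T\<close> over
  \<open>i \<in> V\<^sub>n\<close>, and hence so is \<open>d\<^sub>n = \<pi>\<^sub>n - \<pi>'\<close> the average of \<open>d\<^sub>i T\<close>. The maximum over \<open>n\<close> of the
  \<open>\<ell>\<^sup>1\<close>-norm of \<open>d\<^sub>n T\<^sup>s\<close> is then nondecreasing in \<open>s\<close>, but \<open>T\<^sup>m\<close> contracts it, so all \<open>d\<^sub>n\<close>
  vanish.\<close>

section \<open>Stochastic matrices on a finite set\<close>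

definition stochastic_on :: "'s set \<Rightarrow> ('s \<Rightarrow> 's \<Rightarrow> real) \<Rightarrow> bool" where
  "stochastic_on S P \<longleftrightarrow> (\<forall>x\<in>S. \<forall>y\<in>S. 0 \<le> P x y) \<and> (\<forall>x\<in>S. (\<Sum>y\<in>S. P x y) = 1)"

fun mat_pow_on :: "'s set \<Rightarrow> ('s \<Rightarrow> 's \<Rightarrow> real) \<Rightarrow> nat \<Rightarrow> 's \<Rightarrow> 's \<Rightarrow> real" where
  "mat_pow_on S P 0 = (\<lambda>x y. if x = y then 1 else 0)"
| "mat_pow_on S P (Suc m) = (\<lambda>x y. \<Sum>z\<in>S. mat_pow_on S P m x z * P z y)"

lemma mat_pow_eq_mat_pow_on: "mat_pow K T m = mat_pow_on {1..K} T m"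
  by (induction m) auto

lemma stochastic_on_if_row_stochastic: "row_stochastic K T \<Longrightarrow> stochastic_on {1..K} T"
  unfolding row_stochastic_def stochastic_on_def by blast

lemma mat_pow_on_add:
  assumes "finite S" "y \<in> S"
  shows "mat_pow_on S P (a + b) x y = (\<Sum>z\<in>S. mat_pow_on S P a x z * mat_pow_on S P b z y)"
  using assms(2)
proof (induction b arbitrary: y)
  case 0
  then show ?case using assms(1) by (simp add: of_bool_def[symmetric])
next
  case (Suc b)
  have "mat_pow_on S P (a + Suc b) x y
      = (\<Sum>w\<in>S. (\<Sum>z\<in>S. mat_pow_on S P a x z * mat_pow_on S P b z w) * P w y)"
    using Suc.IH by simp
  also have "\<dots> = (\<Sum>z\<in>S. mat_pow_on S P a x z * mat_pow_on S P (Suc b) z y)"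
    by (simp add: sum_distrib_left sum_distrib_right mult.assoc) (rule sum.swap)
  finally show ?case .
qed

lemma mat_pow_on_Suc_left:
  assumes "finite S" "x \<in> S" "y \<in> S"
  shows "mat_pow_on S P (Suc m) x y = (\<Sum>z\<in>S. P x z * mat_pow_on S P m z y)"
  using mat_pow_on_add[OF assms(1,3), of P 1 m x] assms(1,2) by (simp add: of_bool_def[symmetric])

lemma mat_pow_on_nonneg:
  assumes "stochastic_on S P" "x \<in> S" "y \<in> S"
  shows "0 \<le> mat_pow_on S P m x y"
  using assms(3)
proof (induction m arbitrary: y)
  case (Suc m)
  then show ?case using assms(1,2) unfolding stochastic_on_def by (auto intro!: sum_nonneg)
qed simp

lemma stochastic_on_mat_pow_on:
  assumes "finite S" "stochastic_on S P"
  shows "stochastic_on S (mat_pow_on S P m)"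
proof -
  have "(\<Sum>y\<in>S. mat_pow_on S P m x y) = 1" if "x \<in> S" for x
  proof (induction m)
    case 0
    show ?case using assms(1) that by (simp add: of_bool_def[symmetric])
  next
    case (Suc m)
    have "(\<Sum>y\<in>S. mat_pow_on S P (Suc m) x y) = (\<Sum>z\<in>S. mat_pow_on S P m x z * (\<Sum>y\<in>S. P z y))"
      by (simp add: sum_distrib_left) (rule sum.swap)
    also have "\<dots> = 1" using Suc assms(2) by (simp add: stochastic_on_def)
    finally show ?case .
  qed
  then show ?thesis using mat_pow_on_nonneg[OF assms(2)] unfolding stochastic_on_def by blast
qed

lemma mat_pow_on_mult_le_add:
  assumes "finite S" "stochastic_on S P" "x \<in> S" "z \<in> S" "y \<in> S"
  shows "mat_pow_on S P a x z * mat_pow_on S P b z y \<le> mat_pow_on S P (a + b) x y"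
  unfolding mat_pow_on_add[OF assms(1,5)] using assms
  by (intro member_le_sum) (auto intro!: mult_nonneg_nonneg mat_pow_on_nonneg)

section \<open>Irreducible aperiodic matrices are primitive\<close>

definition primitive_on :: "'s set \<Rightarrow> ('s \<Rightarrow> 's \<Rightarrow> real) \<Rightarrow> bool" where
  "primitive_on S P \<longleftrightarrow> (\<exists>m. \<forall>x\<in>S. \<forall>y\<in>S. 0 < mat_pow_on S P m x y)"

lemma mult_mem_if_add_closed:
  fixes A :: "nat set"
  assumes add: "\<And>a b. a \<in> A \<Longrightarrow> b \<in> A \<Longrightarrow> a + b \<in> A" and "a \<in> A" "k \<ge> 1"
  shows "k * a \<in> A"
  using assms(3)
proof (induction k)
  case (Suc k)
  then show ?case using add \<open>a \<in> A\<close> by (cases "k = 0") auto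
qed simp

lemma ex_consecutive_if_add_closed_Gcd_eq_1:
  fixes A :: "nat set"
  assumes add: "\<And>a b. a \<in> A \<Longrightarrow> b \<in> A \<Longrightarrow> a + b \<in> A" and gcd: "Gcd A = 1"
  shows "\<exists>q\<in>insert 0 A. q + 1 \<in> A"
proof -
  define A0 where "A0 = insert 0 A"
  have add0: "a + b \<in> A" if "a \<in> A" "b \<in> A0" for a b
    using that add by (auto simp: A0_def)
  have mult0: "k * a \<in> A0" if "a \<in> A0" for k a
    using that mult_mem_if_add_closed[OF add, of a k] by (cases "k = 0") (auto simp: A0_def)
  txt \<open>The least gap \<open>d\<close> between an element of \<open>A0\<close> and a larger element of \<open>A\<close> divides
    every \<open>a \<in> A\<close>: the remainder of \<open>a\<close> modulo \<open>d\<close> is again such a gap.\<close>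
  define d where "d = (LEAST d. 0 < d \<and> (\<exists>q\<in>A0. q + d \<in> A))"
  obtain a where "a \<in> A" "a \<noteq> 0" using gcd Gcd_0_iff[of A] by auto
  then have "0 < a \<and> (\<exists>q\<in>A0. q + a \<in> A)" by (auto simp: A0_def)
  then have d: "0 < d \<and> (\<exists>q\<in>A0. q + d \<in> A)" unfolding d_def by (rule LeastI)
  then obtain q where q: "q \<in> A0" "q + d \<in> A" by blast
  have "d dvd a" if a: "a \<in> A" for a
  proof (rule ccontr)
    assume "\<not> d dvd a"
    define t where "t = a div d"
    have "0 < a mod d" using \<open>\<not> d dvd a\<close> by (simp add: dvd_eq_mod_eq_0)
    moreover have "t * (q + d) \<in> A0" using mult0[of "q + d" t] q(2) by (simp add: A0_def)
    moreover have "t * (q + d) + a mod d = a + t * q"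
      using div_mult_mod_eq[of a d] by (simp add: t_def algebra_simps)
    moreover have "a + t * q \<in> A" using add0[OF a mult0[OF q(1)]] .
    ultimately have "0 < a mod d \<and> (\<exists>q'\<in>A0. q' + a mod d \<in> A)" by metis
    then have "d \<le> a mod d" unfolding d_def by (rule Least_le)
    then show False using d mod_less_divisor[of d a] by linarith
  qed
  then have "d dvd Gcd A" by (rule Gcd_greatest)
  then have "d = 1" using gcd by simp
  then show ?thesis using q unfolding A0_def by blast
qed

lemma eventually_mem_if_add_closed_Gcd_eq_1:
  fixes A :: "nat set"
  assumes add: "\<And>a b. a \<in> A \<Longrightarrow> b \<in> A \<Longrightarrow> a + b \<in> A" and gcd: "Gcd A = 1"
  shows "\<forall>\<^sub>F n in sequentially. n \<in> A"
proof -
  obtain q where q: "q \<in> insert 0 A" "q + 1 \<in> A"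
    using ex_consecutive_if_add_closed_Gcd_eq_1[OF add gcd] by blast
  show ?thesis
  proof (cases "q = 0")
    case True
    then show ?thesis
      using q mult_mem_if_add_closed[OF add, of 1] by (auto simp: eventually_sequentially)
  next
    case False
    then have qA: "q \<in> A" using q by simp
    txt \<open>Every \<open>n \<ge> q\<^sup>2\<close> is a combination of \<open>q\<close> and \<open>q + 1\<close> with coefficients in \<open>\<nat>\<close>.\<close>
    have "n \<in> A" if "q * q \<le> n" for n
    proof -
      have "n mod q < q" using False by simp
      moreover have "q \<le> n div q" using div_le_mono[OF that, of q] False by simp
      ultimately have "Suc (n mod q) \<le> n div q" by linarith
      then obtain k where k: "n div q = Suc (n mod q) + k" using le_Suc_ex by blast
      have n: "n = Suc k * q + n mod q * (q + 1)"
        using div_mult_mod_eq[of n q, unfolded k] by (simp add: algebra_simps)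
      have "Suc k * q \<in> A" using mult_mem_if_add_closed[OF add qA, of "Suc k"] by simp
      moreover have "n mod q * (q + 1) \<in> A" if "n mod q \<noteq> 0"
        using mult_mem_if_add_closed[OF add q(2), of "n mod q"] that by simp
      ultimately show ?thesis using add n by (metis add.right_neutral mult_zero_left)
    qed
    then show ?thesis by (auto simp: eventually_sequentially)
  qed
qed

lemma primitive_on_if_irreducible_aperiodic:
  assumes fin: "finite S" and st: "stochastic_on S P"
    and irr: "\<And>x y. x \<in> S \<Longrightarrow> y \<in> S \<Longrightarrow> \<exists>m. 0 < mat_pow_on S P m x y"
    and ap: "\<And>x. x \<in> S \<Longrightarrow> Gcd {m. 0 < m \<and> 0 < mat_pow_on S P m x x} = 1"
  shows "primitive_on S P"
proof -
  have diag: "\<forall>\<^sub>F n in sequentially. 0 < mat_pow_on S P n x x" if x: "x \<in> S" for x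
  proof -
    have "a + b \<in> {m. 0 < m \<and> 0 < mat_pow_on S P m x x}"
      if "a \<in> {m. 0 < m \<and> 0 < mat_pow_on S P m x x}" "b \<in> {m. 0 < m \<and> 0 < mat_pow_on S P m x x}"
      for a b
      using that mat_pow_on_mult_le_add[OF fin st x x x, of a b]
      by (auto intro: order.strict_trans2[OF mult_pos_pos])
    then have "\<forall>\<^sub>F n in sequentially. n \<in> {m. 0 < m \<and> 0 < mat_pow_on S P m x x}"
      using ap[OF x] by (rule eventually_mem_if_add_closed_Gcd_eq_1)
    then show ?thesis by (rule eventually_mono) simp
  qed
  have "\<forall>\<^sub>F n in sequentially. 0 < mat_pow_on S P n x y" if x: "x \<in> S" and y: "y \<in> S" for x y
  proof -
    obtain m where m: "0 < mat_pow_on S P m x y" using irr[OF x y] by blast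
    obtain n0 where n0: "\<And>n. n \<ge> n0 \<Longrightarrow> 0 < mat_pow_on S P n x x"
      using diag[OF x] unfolding eventually_sequentially by blast
    have "0 < mat_pow_on S P n x y" if "n \<ge> n0 + m" for n
    proof -
      have "0 < mat_pow_on S P (n - m) x x * mat_pow_on S P m x y" using n0 m that by simp
      also have "\<dots> \<le> mat_pow_on S P n x y"
        using mat_pow_on_mult_le_add[OF fin st x x y, of "n - m" m] that by simp
      finally show ?thesis .
    qed
    then show ?thesis unfolding eventually_sequentially by blast
  qed
  then have "\<forall>\<^sub>F n in sequentially. \<forall>x\<in>S. \<forall>y\<in>S. 0 < mat_pow_on S P n x y"
    using fin by (auto intro!: eventually_ball_finite)
  then show ?thesis unfolding primitive_on_def eventually_sequentially by blast
qed

section \<open>Invariant measures\<close>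

definition l1_contraction :: "'s set \<Rightarrow> ('s \<Rightarrow> 's \<Rightarrow> real) \<Rightarrow> real \<Rightarrow> bool" where
  "l1_contraction S Q c \<longleftrightarrow>
     (\<forall>d. (\<Sum>x\<in>S. d x) = 0 \<longrightarrow> (\<Sum>y\<in>S. \<bar>\<Sum>x\<in>S. d x * Q x y\<bar>) \<le> c * (\<Sum>x\<in>S. \<bar>d x\<bar>))"

lemma l1_contraction_if_entries_ge:
  assumes "finite S" "stochastic_on S Q" "\<And>x y. x \<in> S \<Longrightarrow> y \<in> S \<Longrightarrow> \<delta> \<le> Q x y"
  shows "l1_contraction S Q (1 - real (card S) * \<delta>)"
  unfolding l1_contraction_def
proof (intro allI impI)
  fix d :: "'a \<Rightarrow> real"
  assume sum_0: "(\<Sum>x\<in>S. d x) = 0"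
  txt \<open>As \<open>d\<close> sums to zero, lowering every entry of \<open>Q\<close> by \<open>\<delta>\<close> does not change \<open>d Q\<close>.\<close>
  have "(\<Sum>y\<in>S. \<bar>\<Sum>x\<in>S. d x * Q x y\<bar>) = (\<Sum>y\<in>S. \<bar>\<Sum>x\<in>S. d x * (Q x y - \<delta>)\<bar>)"
    using sum_0 by (simp add: right_diff_distrib sum_subtractf flip: sum_distrib_right)
  also have "\<dots> \<le> (\<Sum>y\<in>S. \<Sum>x\<in>S. \<bar>d x\<bar> * (Q x y - \<delta>))"
    using assms(3) by (intro sum_mono order.trans[OF sum_abs]) (simp add: abs_mult)
  also have "\<dots> = (\<Sum>x\<in>S. \<bar>d x\<bar> * ((\<Sum>y\<in>S. Q x y) - real (card S) * \<delta>))"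
    by (subst sum.swap) (simp add: sum_distrib_left right_diff_distrib sum_subtractf mult_ac)
  also have "\<dots> = (1 - real (card S) * \<delta>) * (\<Sum>x\<in>S. \<bar>d x\<bar>)"
    using assms(2) by (simp add: stochastic_on_def sum_distrib_right mult.commute)
  finally show "(\<Sum>y\<in>S. \<bar>\<Sum>x\<in>S. d x * Q x y\<bar>) \<le> (1 - real (card S) * \<delta>) * (\<Sum>x\<in>S. \<bar>d x\<bar>)" .
qed

lemma l1_contraction_if_primitive_on:
  assumes fin: "finite S" and ne: "S \<noteq> {}" and st: "stochastic_on S P" and prim: "primitive_on S P"
  obtains m c where "0 \<le> c" "c < 1" "l1_contraction S (mat_pow_on S P m) c"
proof -
  obtain m where pos: "\<And>x y. x \<in> S \<Longrightarrow> y \<in> S \<Longrightarrow> 0 < mat_pow_on S P m x y"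
    using prim unfolding primitive_on_def by blast
  define Q where "Q = mat_pow_on S P m"
  have Q_st: "stochastic_on S Q" unfolding Q_def using fin st by (rule stochastic_on_mat_pow_on)
  define \<delta> where "\<delta> = Min ((\<lambda>(x, y). Q x y) ` (S \<times> S))"
  have \<delta>_le: "\<delta> \<le> Q x y" if "x \<in> S" "y \<in> S" for x y
    unfolding \<delta>_def using fin that by (intro Min_le) auto
  have "0 < \<delta>" unfolding \<delta>_def Q_def using fin ne pos by (subst Min_gr_iff) auto
  then have "0 < real (card S) * \<delta>" using fin ne by (simp add: card_gt_0_iff)
  moreover obtain x0 where x0: "x0 \<in> S" using ne by blast
  then have "real (card S) * \<delta> \<le> (\<Sum>y\<in>S. Q x0 y)"
    using \<delta>_le sum_mono[of S "\<lambda>_. \<delta>" "Q x0"] by simp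
  then have "real (card S) * \<delta> \<le> 1" using Q_st x0 by (simp add: stochastic_on_def)
  ultimately show ?thesis
    using that[of "1 - real (card S) * \<delta>" m] l1_contraction_if_entries_ge[OF fin Q_st \<delta>_le]
    unfolding Q_def by simp
qed

lemma nonneg_le_mult_imp_eq_0:
  fixes a c :: real
  assumes "0 \<le> a" "a \<le> c * a" "c < 1"
  shows "a = 0"
  using assms mult_le_cancel_right1[of a c] by auto

lemma invariant_measureD:
  assumes "invariant_measure S P \<mu>"
  shows "x \<notin> S \<Longrightarrow> \<mu> x = 0" "x \<in> S \<Longrightarrow> 0 \<le> \<mu> x" "(\<Sum>x\<in>S. \<mu> x) = 1"
    "y \<in> S \<Longrightarrow> (\<Sum>x\<in>S. \<mu> x * P x y) = \<mu> y"
  using assms unfolding invariant_measure_def by blast+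

lemma invariant_measureI:
  assumes "\<And>x. x \<notin> S \<Longrightarrow> \<mu> x = 0" "\<And>x. x \<in> S \<Longrightarrow> 0 \<le> \<mu> x" "(\<Sum>x\<in>S. \<mu> x) = 1"
    "\<And>y. y \<in> S \<Longrightarrow> (\<Sum>x\<in>S. \<mu> x * P x y) = \<mu> y"
  shows "invariant_measure S P \<mu>"
  using assms unfolding invariant_measure_def by blast

lemma invariant_measure_mat_pow_on:
  assumes "finite S" "invariant_measure S P \<mu>"
  shows "invariant_measure S (mat_pow_on S P m) \<mu>"
proof (rule invariant_measureI[OF invariant_measureD(1-3)[OF assms(2)]])
  fix y assume "y \<in> S"
  then show "(\<Sum>x\<in>S. \<mu> x * mat_pow_on S P m x y) = \<mu> y"
  proof (induction m arbitrary: y)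
    case 0
    then show ?case using assms(1) by (simp add: of_bool_def[symmetric])
  next
    case (Suc m)
    have "(\<Sum>x\<in>S. \<mu> x * mat_pow_on S P (Suc m) x y) = (\<Sum>z\<in>S. (\<Sum>x\<in>S. \<mu> x * mat_pow_on S P m x z) * P z y)"
      by (simp add: sum_distrib_left sum_distrib_right mult.assoc) (rule sum.swap)
    also have "\<dots> = \<mu> y" using Suc invariant_measureD(4)[OF assms(2)] by simp
    finally show ?case .
  qed
qed

lemma invariant_measure_unique_if_l1_contraction:
  assumes "finite S" "l1_contraction S Q c" "c < 1"
    and \<mu>: "invariant_measure S Q \<mu>" and \<nu>: "invariant_measure S Q \<nu>"
  shows "\<mu> = \<nu>"
proof -
  define d where "d x = \<mu> x - \<nu> x" for x
  have "(\<Sum>x\<in>S. d x) = 0"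
    using invariant_measureD(3)[OF \<mu>] invariant_measureD(3)[OF \<nu>] by (simp add: d_def sum_subtractf)
  then have "(\<Sum>y\<in>S. \<bar>\<Sum>x\<in>S. d x * Q x y\<bar>) \<le> c * (\<Sum>x\<in>S. \<bar>d x\<bar>)"
    using assms(2) unfolding l1_contraction_def by blast
  moreover have "(\<Sum>x\<in>S. d x * Q x y) = d y" if "y \<in> S" for y
    using invariant_measureD(4)[OF \<mu> that] invariant_measureD(4)[OF \<nu> that]
    by (simp add: d_def left_diff_distrib sum_subtractf)
  ultimately have "(\<Sum>x\<in>S. \<bar>d x\<bar>) \<le> c * (\<Sum>x\<in>S. \<bar>d x\<bar>)" by simp
  then have "(\<Sum>x\<in>S. \<bar>d x\<bar>) = 0" using assms(3) by (intro nonneg_le_mult_imp_eq_0) auto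
  then have "d x = 0" if "x \<in> S" for x using assms(1) that by (simp add: sum_nonneg_eq_0_iff)
  then have "\<mu> x = \<nu> x" for x
    using invariant_measureD(1)[OF \<mu>, of x] invariant_measureD(1)[OF \<nu>, of x]
    by (cases "x \<in> S") (auto simp: d_def)
  then show ?thesis by (rule ext)
qed

lemma convergent_if_geometric_steps:
  fixes a :: "nat \<Rightarrow> real"
  assumes "0 \<le> c" "c < 1" "\<And>k. \<bar>a (Suc k) - a k\<bar> \<le> B * c ^ k"
  shows "convergent a"
proof -
  have "summable (\<lambda>k. B * c ^ k)" using assms(1,2) by (intro summable_mult summable_geometric) simp
  then have "summable (\<lambda>k. a (Suc k) - a k)"
    by (rule summable_comparison_test[rotated]) (use assms(3) in auto)
  then have "convergent (\<lambda>n. a n - a 0)" by (simp add: summable_iff_convergent sum_lessThan_telescope)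
  then show ?thesis by (simp add: convergent_diff_const_right_iff)
qed

definition prob_vector_on :: "'s set \<Rightarrow> ('s \<Rightarrow> real) \<Rightarrow> bool" where
  "prob_vector_on S u \<longleftrightarrow> (\<forall>x. x \<notin> S \<longrightarrow> u x = 0) \<and> (\<forall>x\<in>S. 0 \<le> u x) \<and> (\<Sum>x\<in>S. u x) = 1"

definition vec_mult_on :: "'s set \<Rightarrow> ('s \<Rightarrow> real) \<Rightarrow> ('s \<Rightarrow> 's \<Rightarrow> real) \<Rightarrow> 's \<Rightarrow> real" where
  "vec_mult_on S u Q y = (if y \<in> S then \<Sum>x\<in>S. u x * Q x y else 0)"

lemma invariant_measure_iff: "invariant_measure S P \<mu> \<longleftrightarrow> prob_vector_on S \<mu> \<and> vec_mult_on S \<mu> P = \<mu>"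
  unfolding invariant_measure_def prob_vector_on_def vec_mult_on_def by (auto simp: fun_eq_iff)

lemma prob_vector_on_vec_mult_on:
  assumes "stochastic_on S Q" "prob_vector_on S u"
  shows "prob_vector_on S (vec_mult_on S u Q)"
proof -
  have "(\<Sum>y\<in>S. vec_mult_on S u Q y) = (\<Sum>x\<in>S. u x * (\<Sum>y\<in>S. Q x y))"
    by (simp add: vec_mult_on_def sum_distrib_left) (rule sum.swap)
  then show ?thesis using assms
    by (auto simp: prob_vector_on_def vec_mult_on_def stochastic_on_def intro!: sum_nonneg)
qed

lemma sum_abs_vec_mult_on_diff_le:
  assumes "l1_contraction S Q c" "(\<Sum>x\<in>S. u x) = (\<Sum>x\<in>S. v x)"
  shows "(\<Sum>y\<in>S. \<bar>vec_mult_on S u Q y - vec_mult_on S v Q y\<bar>) \<le> c * (\<Sum>x\<in>S. \<bar>u x - v x\<bar>)"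
proof -
  have "(\<Sum>y\<in>S. \<bar>vec_mult_on S u Q y - vec_mult_on S v Q y\<bar>) = (\<Sum>y\<in>S. \<bar>\<Sum>x\<in>S. (u x - v x) * Q x y\<bar>)"
    by (intro sum.cong) (auto simp: vec_mult_on_def left_diff_distrib sum_subtractf)
  also have "\<dots> \<le> c * (\<Sum>x\<in>S. \<bar>u x - v x\<bar>)"
    using assms(1)[unfolded l1_contraction_def, rule_format, of "\<lambda>x. u x - v x"] assms(2)
    by (simp add: sum_subtractf)
  finally show ?thesis .
qed

lemma ex_invariant_measure_if_l1_contraction:
  assumes fin: "finite S" and ne: "S \<noteq> {}" and st: "stochastic_on S Q"
    and contr: "l1_contraction S Q c" and c: "0 \<le> c" "c < 1"
  shows "\<exists>\<mu>. invariant_measure S Q \<mu>"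
proof -
  define f where "f k = ((\<lambda>u. vec_mult_on S u Q) ^^ k) (\<lambda>x. if x \<in> S then 1 / real (card S) else 0)"
    for k
  have f_Suc: "f (Suc k) = vec_mult_on S (f k) Q" for k by (simp add: f_def)
  have f_prob: "prob_vector_on S (f k)" for k
  proof (induction k)
    case 0
    show ?case using fin ne by (simp add: f_def prob_vector_on_def)
  next
    case (Suc k)
    then show ?case unfolding f_Suc by (rule prob_vector_on_vec_mult_on[OF st])
  qed
  define D where "D k = (\<Sum>y\<in>S. \<bar>f (Suc k) y - f k y\<bar>)" for k
  have D_le: "D k \<le> D 0 * c ^ k" for k
  proof (induction k)
    case (Suc k)
    have "D (Suc k) \<le> c * D k"
      using sum_abs_vec_mult_on_diff_le[OF contr, of "f (Suc k)" "f k"] f_prob[of "Suc k"] f_prob[of k]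
      unfolding D_def f_Suc prob_vector_on_def by simp
    also have "\<dots> \<le> D 0 * c ^ Suc k" using Suc c(1) by (simp add: mult_left_mono mult_ac)
    finally show ?case .
  qed simp
  have "convergent (\<lambda>k. f k y)" for y
  proof (rule convergent_if_geometric_steps[OF c])
    fix k
    show "\<bar>f (Suc k) y - f k y\<bar> \<le> D 0 * c ^ k"
    proof (cases "y \<in> S")
      case True
      then have "\<bar>f (Suc k) y - f k y\<bar> \<le> D k"
        unfolding D_def using fin by (intro member_le_sum) auto
      then show ?thesis using D_le[of k] by linarith
    next
      case False
      have "0 \<le> D k" unfolding D_def by (simp add: sum_nonneg)
      then show ?thesis using f_prob False D_le[of k] by (simp add: prob_vector_on_def)
    qed
  qed
  then obtain \<mu> where lim: "\<And>y. (\<lambda>k. f k y) \<longlonglongrightarrow> \<mu> y"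
    unfolding convergent_def by metis
  have "prob_vector_on S \<mu>"
    unfolding prob_vector_on_def
  proof (intro conjI allI ballI impI)
    show "\<mu> y = 0" if "y \<notin> S" for y
      using lim[of y] f_prob that by (simp add: prob_vector_on_def LIMSEQ_const_iff)
    show "0 \<le> \<mu> y" if "y \<in> S" for y
      using lim[of y] f_prob that by (intro LIMSEQ_le_const[of "\<lambda>k. f k y"]) (auto simp: prob_vector_on_def)
    show "(\<Sum>y\<in>S. \<mu> y) = 1"
      using tendsto_sum[of S "\<lambda>y k. f k y", OF lim] f_prob by (simp add: prob_vector_on_def LIMSEQ_const_iff)
  qed
  moreover have "vec_mult_on S \<mu> Q y = \<mu> y" for y
  proof (rule LIMSEQ_unique)
    show "(\<lambda>k. f (Suc k) y) \<longlonglongrightarrow> vec_mult_on S \<mu> Q y"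
      unfolding f_Suc vec_mult_on_def by (simp add: tendsto_sum tendsto_mult_right lim)
    show "(\<lambda>k. f (Suc k) y) \<longlonglongrightarrow> \<mu> y" using lim by (rule LIMSEQ_Suc)
  qed
  ultimately show ?thesis unfolding invariant_measure_iff by blast
qed

lemma invariant_measure_vec_mult_on:
  assumes fin: "finite S" and st: "stochastic_on S P"
    and \<nu>: "invariant_measure S (mat_pow_on S P m) \<nu>"
  shows "invariant_measure S (mat_pow_on S P m) (vec_mult_on S \<nu> P)"
    (is "invariant_measure S ?Q ?w")
proof -
  txt \<open>\<open>\<nu> P Q = \<nu> Q P = \<nu> P\<close>, since \<open>P\<close> commutes with its power \<open>Q\<close>.\<close>
  have "(\<Sum>x\<in>S. ?w x * ?Q x y) = ?w y" if y: "y \<in> S" for y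
  proof -
    have "(\<Sum>x\<in>S. ?w x * ?Q x y) = (\<Sum>z\<in>S. \<nu> z * (\<Sum>x\<in>S. P z x * ?Q x y))"
      by (simp add: vec_mult_on_def sum_distrib_left sum_distrib_right mult.assoc) (rule sum.swap)
    also have "\<dots> = (\<Sum>z\<in>S. \<nu> z * mat_pow_on S P (Suc m) z y)"
      using mat_pow_on_Suc_left[OF fin _ y] by simp
    also have "\<dots> = (\<Sum>x\<in>S. (\<Sum>z\<in>S. \<nu> z * ?Q z x) * P x y)"
      by (simp add: sum_distrib_left sum_distrib_right mult.assoc) (rule sum.swap)
    also have "\<dots> = ?w y" using invariant_measureD(4)[OF \<nu>] y by (simp add: vec_mult_on_def)
    finally show ?thesis .
  qed
  moreover have "prob_vector_on S ?w"
    using \<nu> by (intro prob_vector_on_vec_mult_on st) (simp add: invariant_measure_iff)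
  ultimately show ?thesis unfolding prob_vector_on_def by (intro invariant_measureI) auto
qed

lemma ex1_invariant_measure_if_primitive_on:
  assumes fin: "finite S" and ne: "S \<noteq> {}" and st: "stochastic_on S P" and prim: "primitive_on S P"
  shows "\<exists>!\<mu>. invariant_measure S P \<mu>"
proof -
  obtain m c where c: "0 \<le> c" "c < 1" and contr: "l1_contraction S (mat_pow_on S P m) c"
    using l1_contraction_if_primitive_on[OF assms] .
  have unique: "\<mu> = \<nu>"
    if "invariant_measure S (mat_pow_on S P m) \<mu>" "invariant_measure S (mat_pow_on S P m) \<nu>" for \<mu> \<nu>
    using invariant_measure_unique_if_l1_contraction[OF fin contr c(2)] that .
  obtain \<nu> where \<nu>: "invariant_measure S (mat_pow_on S P m) \<nu>"
    using ex_invariant_measure_if_l1_contraction[OF fin ne stochastic_on_mat_pow_on[OF fin st] contr c]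
    by blast
  have "vec_mult_on S \<nu> P = \<nu>" using unique[OF invariant_measure_vec_mult_on[OF fin st \<nu>] \<nu>] .
  then have "invariant_measure S P \<nu>" using \<nu> by (simp add: invariant_measure_iff)
  moreover have "\<mu> = \<nu>" if "invariant_measure S P \<mu>" for \<mu>
    using unique[OF invariant_measure_mat_pow_on[OF fin that] \<nu>] .
  ultimately show ?thesis by blast
qed

section \<open>Chains dominating a product chain\<close>

lemma mat_pow_on_PiE_ge_prod:
  assumes fin: "finite I" "finite S" and T: "stochastic_on S T"
    and G: "stochastic_on (PiE I (\<lambda>_. S)) G" and c: "0 \<le> c"
    and ge: "\<And>x y. x \<in> PiE I (\<lambda>_. S) \<Longrightarrow> y \<in> PiE I (\<lambda>_. S) \<Longrightarrow>
               c * (\<Prod>n\<in>I. T (x n) (y n)) \<le> G x y"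
    and x: "x \<in> PiE I (\<lambda>_. S)" and y: "y \<in> PiE I (\<lambda>_. S)"
  shows "c ^ m * (\<Prod>n\<in>I. mat_pow_on S T m (x n) (y n)) \<le> mat_pow_on (PiE I (\<lambda>_. S)) G m x y"
  using y
proof (induction m arbitrary: y)
  case 0
  show ?case
  proof (cases "x = y")
    case False
    then obtain n where "n \<in> I" "x n \<noteq> y n" using x 0 PiE_ext by metis
    then have "(\<Prod>n\<in>I. mat_pow_on S T 0 (x n) (y n)) = 0" using fin(1) by (intro prod_zero) auto
    then show ?thesis using False by simp
  qed simp
next
  case (Suc m)
  let ?X = "PiE I (\<lambda>_. S)"
  have "(\<Prod>n\<in>I. mat_pow_on S T (Suc m) (x n) (y n))
      = (\<Sum>z\<in>?X. (\<Prod>n\<in>I. mat_pow_on S T m (x n) (z n)) * (\<Prod>n\<in>I. T (z n) (y n)))"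
    using fin by (simp add: prod_sum_PiE prod.distrib)
  then have "c ^ Suc m * (\<Prod>n\<in>I. mat_pow_on S T (Suc m) (x n) (y n))
      = (\<Sum>z\<in>?X. (c ^ m * (\<Prod>n\<in>I. mat_pow_on S T m (x n) (z n))) * (c * (\<Prod>n\<in>I. T (z n) (y n))))"
    by (simp add: sum_distrib_left mult_ac)
  also have "\<dots> \<le> (\<Sum>z\<in>?X. mat_pow_on ?X G m x z * G z y)"
  proof (rule sum_mono)
    fix z assume z: "z \<in> ?X"
    have "0 \<le> c * (\<Prod>n\<in>I. T (z n) (y n))"
      using c T z Suc.prems by (auto simp: stochastic_on_def intro!: mult_nonneg_nonneg prod_nonneg)
    then show "(c ^ m * (\<Prod>n\<in>I. mat_pow_on S T m (x n) (z n))) * (c * (\<Prod>n\<in>I. T (z n) (y n)))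
        \<le> mat_pow_on ?X G m x z * G z y"
      using Suc.IH[OF z] ge[OF z Suc.prems] mat_pow_on_nonneg[OF G x z] by (intro mult_mono) auto
  qed
  also have "\<dots> = mat_pow_on ?X G (Suc m) x y" by simp
  finally show ?case .
qed

lemma primitive_on_PiE_if_ge_prod:
  assumes "finite I" "finite S" "stochastic_on S T" "primitive_on S T"
    and "stochastic_on (PiE I (\<lambda>_. S)) G" "0 < c"
    and "\<And>x y. x \<in> PiE I (\<lambda>_. S) \<Longrightarrow> y \<in> PiE I (\<lambda>_. S) \<Longrightarrow>
               c * (\<Prod>n\<in>I. T (x n) (y n)) \<le> G x y"
  shows "primitive_on (PiE I (\<lambda>_. S)) G"
proof -
  obtain m where m: "\<And>a b. a \<in> S \<Longrightarrow> b \<in> S \<Longrightarrow> 0 < mat_pow_on S T m a b"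
    using assms(4) unfolding primitive_on_def by blast
  have "0 < mat_pow_on (PiE I (\<lambda>_. S)) G m x y"
    if "x \<in> PiE I (\<lambda>_. S)" "y \<in> PiE I (\<lambda>_. S)" for x y
  proof -
    have "0 < c ^ m * (\<Prod>n\<in>I. mat_pow_on S T m (x n) (y n))"
      using assms(6) m that by (auto intro!: mult_pos_pos prod_pos)
    also have "\<dots> \<le> mat_pow_on (PiE I (\<lambda>_. S)) G m x y"
      using assms(6) by (intro mat_pow_on_PiE_ge_prod[OF assms(1-3,5) _ assms(7) that]) simp
    finally show ?thesis .
  qed
  then show ?thesis unfolding primitive_on_def by blast
qed

lemma sum_PiE_prod_fixed_coordinate:
  fixes f :: "'i \<Rightarrow> 'b \<Rightarrow> real"
  assumes "finite I" "finite B" "n \<in> I" "k \<in> B" "\<And>m. m \<in> I \<Longrightarrow> (\<Sum>b\<in>B. f m b) = 1"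
  shows "(\<Sum>y\<in>{y \<in> PiE I (\<lambda>_. B). y n = k}. \<Prod>m\<in>I. f m (y m)) = f n k"
proof -
  have "{y \<in> PiE I (\<lambda>_. B). y n = k} = PiE I (\<lambda>m. if m = n then {k} else B)"
  proof (intro set_eqI iffI)
    fix y assume "y \<in> {y \<in> PiE I (\<lambda>_. B). y n = k}"
    then show "y \<in> PiE I (\<lambda>m. if m = n then {k} else B)" by (auto simp: PiE_iff)
  next
    fix y assume "y \<in> PiE I (\<lambda>m. if m = n then {k} else B)"
    then show "y \<in> {y \<in> PiE I (\<lambda>_. B). y n = k}"
      using assms(3,4) by (auto simp: PiE_iff split: if_splits)
  qed
  then have "(\<Sum>y\<in>{y \<in> PiE I (\<lambda>_. B). y n = k}. \<Prod>m\<in>I. f m (y m))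
      = (\<Prod>m\<in>I. \<Sum>b\<in>(if m = n then {k} else B). f m b)"
    using assms(1,2) by (simp add: prod_sum_PiE)
  also have "\<dots> = (\<Prod>m\<in>I. if m = n then f n k else 1)"
    using assms(5) by (intro prod.cong) auto
  also have "\<dots> = f n k" using assms(1,3) by simp
  finally show ?thesis .
qed

section \<open>The probabilistic cellular automaton\<close>

lemma nbhd_subset: "N \<ge> 1 \<Longrightarrow> nbhd N nv n \<subseteq> {1..N}"
  unfolding nbhd_def
proof clarify
  fix j :: int assume "N \<ge> 1"
  then have "0 \<le> (int n + j - 1) mod int N" "(int n + j - 1) mod int N < int N" by simp_all
  then show "nat ((int n + j - 1) mod int N + 1) \<in> {1..N}" by auto
qed

lemma self_mem_nbhd: "n \<in> {1..N} \<Longrightarrow> n \<in> nbhd N nv n"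
  unfolding nbhd_def by (auto intro!: exI[of _ 0] simp: mod_pos_pos_trivial)

lemma finite_nbhd: "N \<ge> 1 \<Longrightarrow> finite (nbhd N nv n)"
  by (rule finite_subset[OF nbhd_subset]) auto

lemma card_nbhd_pos: "n \<in> {1..N} \<Longrightarrow> 0 < card (nbhd N nv n)"
  using finite_nbhd[of N nv n] self_mem_nbhd[of n N nv] by (auto simp: card_gt_0_iff)

lemma finite_config_space: "finite (config_space N K)"
  unfolding config_space_def by (simp add: finite_PiE)

lemma config_space_nonempty: "K \<ge> 1 \<Longrightarrow> config_space N K \<noteq> {}"
  unfolding config_space_def by (simp add: PiE_eq_empty_iff)

lemma config_space_memD: "x \<in> config_space N K \<Longrightarrow> n \<in> {1..N} \<Longrightarrow> x n \<in> {1..K}"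
  unfolding config_space_def by auto

lemma config_space_nbhd_memD:
  "N \<ge> 1 \<Longrightarrow> x \<in> config_space N K \<Longrightarrow> i \<in> nbhd N nv n \<Longrightarrow> x i \<in> {1..K}"
  using nbhd_subset[of N nv n] config_space_memD[of x N K i] by blast

definition local_trans :: "nat \<Rightarrow> nat \<Rightarrow> (nat \<Rightarrow> nat \<Rightarrow> real) \<Rightarrow> (nat \<Rightarrow> nat) \<Rightarrow> nat \<Rightarrow> nat \<Rightarrow> real" where
  "local_trans N nv T x n k = (\<Sum>i\<in>nbhd N nv n. T (x i) k) / real (card (nbhd N nv n))"

lemma global_trans_eq_prod_local_trans:
  "global_trans N nv T x y = (\<Prod>n\<in>{1..N}. local_trans N nv T x n (y n))"
  unfolding global_trans_def local_trans_def by simp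

lemma sum_local_trans_eq_1:
  assumes "N \<ge> 1" "row_stochastic K T" "x \<in> config_space N K" "n \<in> {1..N}"
  shows "(\<Sum>k\<in>{1..K}. local_trans N nv T x n k) = 1"
proof -
  have "(\<Sum>k\<in>{1..K}. local_trans N nv T x n k)
      = (\<Sum>i\<in>nbhd N nv n. \<Sum>k\<in>{1..K}. T (x i) k) / real (card (nbhd N nv n))"
    unfolding local_trans_def by (subst sum.swap) (simp add: sum_divide_distrib)
  also have "\<dots> = 1"
    using assms config_space_nbhd_memD[OF assms(1,3)] card_nbhd_pos[OF assms(4)]
    by (simp add: row_stochastic_def)
  finally show ?thesis .
qed

lemma local_trans_nonneg:
  assumes "N \<ge> 1" "row_stochastic K T" "x \<in> config_space N K" "k \<in> {1..K}"
  shows "0 \<le> local_trans N nv T x n k"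
  unfolding local_trans_def using assms config_space_nbhd_memD[OF assms(1,3)]
  by (intro divide_nonneg_nonneg sum_nonneg) (auto simp: row_stochastic_def)

lemma stochastic_on_global_trans:
  assumes "N \<ge> 1" "row_stochastic K T"
  shows "stochastic_on (config_space N K) (global_trans N nv T)"
  unfolding stochastic_on_def global_trans_eq_prod_local_trans
proof (intro conjI ballI)
  fix x y assume x: "x \<in> config_space N K" and y: "y \<in> config_space N K"
  show "0 \<le> (\<Prod>n\<in>{1..N}. local_trans N nv T x n (y n))"
    using local_trans_nonneg[OF assms x] config_space_memD[OF y] by (intro prod_nonneg) auto
next
  fix x assume x: "x \<in> config_space N K"
  have "(\<Sum>y\<in>config_space N K. \<Prod>n\<in>{1..N}. local_trans N nv T x n (y n))
      = (\<Prod>n\<in>{1..N}. \<Sum>k\<in>{1..K}. local_trans N nv T x n k)"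
    unfolding config_space_def by (simp add: prod_sum_PiE)
  also have "\<dots> = 1" using sum_local_trans_eq_1[OF assms x] by simp
  finally show "(\<Sum>y\<in>config_space N K. \<Prod>n\<in>{1..N}. local_trans N nv T x n (y n)) = 1" .
qed

lemma global_trans_ge_prod:
  assumes "N \<ge> 1" "row_stochastic K T" "x \<in> config_space N K" "y \<in> config_space N K"
  shows "(\<Prod>n\<in>{1..N}. 1 / real (card (nbhd N nv n))) * (\<Prod>n\<in>{1..N}. T (x n) (y n))
           \<le> global_trans N nv T x y"
  unfolding global_trans_eq_prod_local_trans prod.distrib[symmetric]
proof (rule prod_mono)
  fix n assume n: "n \<in> {1..N}"
  have T_nonneg: "0 \<le> T a b" if "a \<in> {1..K}" "b \<in> {1..K}" for a b
    using assms(2) that by (simp add: row_stochastic_def)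
  have "T (x n) (y n) \<le> (\<Sum>i\<in>nbhd N nv n. T (x i) (y n))"
    using n config_space_nbhd_memD[OF assms(1,3)] config_space_memD[OF assms(4) n]
    by (intro member_le_sum self_mem_nbhd finite_nbhd assms(1) T_nonneg) auto
  then show "0 \<le> 1 / real (card (nbhd N nv n)) * T (x n) (y n) \<and>
      1 / real (card (nbhd N nv n)) * T (x n) (y n) \<le> local_trans N nv T x n (y n)"
    unfolding local_trans_def
    using T_nonneg[OF config_space_memD[OF assms(3) n] config_space_memD[OF assms(4) n]]
    by (simp add: divide_right_mono)
qed

lemma primitive_on_global_trans:
  assumes "N \<ge> 1" "row_stochastic K T" "primitive_on {1..K} T"
  shows "primitive_on (config_space N K) (global_trans N nv T)"
proof -
  have c: "0 < (\<Prod>n\<in>{1..N}. 1 / real (card (nbhd N nv n)))" using card_nbhd_pos by (intro prod_pos) simp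
  have "primitive_on (PiE {1..N} (\<lambda>_. {1..K})) (global_trans N nv T)"
    by (rule primitive_on_PiE_if_ge_prod[OF _ _ stochastic_on_if_row_stochastic[OF assms(2)] assms(3)
          stochastic_on_global_trans[OF assms(1,2), unfolded config_space_def] c
          global_trans_ge_prod[OF assms(1,2), unfolded config_space_def]]) auto
  then show ?thesis unfolding config_space_def .
qed

lemma sum_global_trans_fixed_coordinate:
  assumes "N \<ge> 1" "row_stochastic K T" "x \<in> config_space N K" "n \<in> {1..N}" "k \<in> {1..K}"
  shows "(\<Sum>y\<in>{y \<in> config_space N K. y n = k}. global_trans N nv T x y) = local_trans N nv T x n k"
  unfolding global_trans_eq_prod_local_trans config_space_def
  using assms sum_local_trans_eq_1[OF assms(1-3)] by (intro sum_PiE_prod_fixed_coordinate) auto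

lemma row_stochastic_eq_if_global_trans_eq:
  assumes "N \<ge> 1" "row_stochastic K T1" "row_stochastic K T2"
    and eq: "\<And>x y. x \<in> config_space N K \<Longrightarrow> y \<in> config_space N K \<Longrightarrow>
               global_trans N nv T1 x y = global_trans N nv T2 x y"
    and i: "i \<in> {1..K}" and j: "j \<in> {1..K}"
  shows "T1 i j = T2 i j"
proof -
  define x where "x = (\<lambda>n\<in>{1..N}. i)"
  have x: "x \<in> config_space N K" using i unfolding x_def config_space_def by simp
  have one: "1 \<in> {1..N}" using assms(1) by simp
  have row: "T i j = (\<Sum>y\<in>{y \<in> config_space N K. y 1 = j}. global_trans N nv T x y)"
    if "row_stochastic K T" for T
  proof -
    have "local_trans N nv T x 1 j = T i j"
      using nbhd_subset[OF assms(1)] card_nbhd_pos[OF one]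
      by (auto simp: local_trans_def x_def subset_iff cong: sum.cong)
    then show ?thesis using sum_global_trans_fixed_coordinate[OF assms(1) that x one j] by simp
  qed
  show ?thesis using row[OF assms(2)] row[OF assms(3)] eq[OF x] by simp
qed

lemma sum_config_space_by_coordinate:
  assumes "i \<in> {1..N}"
  shows "(\<Sum>x\<in>config_space N K. h x) = (\<Sum>j\<in>{1..K}. \<Sum>x\<in>{x \<in> config_space N K. x i = j}. h x)"
proof (rule sum.group[symmetric])
  show "(\<lambda>x. x i) ` config_space N K \<subseteq> {1..K}" using config_space_memD assms by blast
qed (simp_all add: finite_config_space)

lemma marginal_invariant_measure:
  assumes "N \<ge> 1" "row_stochastic K T"
    and \<pi>: "invariant_measure (config_space N K) (global_trans N nv T) \<pi>"
    and n: "n \<in> {1..N}" and k: "k \<in> {1..K}"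
  shows "marginal N K \<pi> n k
           = (\<Sum>i\<in>nbhd N nv n. \<Sum>j\<in>{1..K}. marginal N K \<pi> i j * T j k) / real (card (nbhd N nv n))"
proof -
  let ?X = "config_space N K"
  have "marginal N K \<pi> n k = (\<Sum>y\<in>{y \<in> ?X. y n = k}. \<Sum>x\<in>?X. \<pi> x * global_trans N nv T x y)"
    unfolding marginal_def using invariant_measureD(4)[OF \<pi>] by simp
  also have "\<dots> = (\<Sum>x\<in>?X. \<pi> x * (\<Sum>y\<in>{y \<in> ?X. y n = k}. global_trans N nv T x y))"
    by (subst sum.swap) (simp add: sum_distrib_left)
  also have "\<dots> = (\<Sum>x\<in>?X. \<pi> x * local_trans N nv T x n k)"
    using sum_global_trans_fixed_coordinate[OF assms(1,2) _ n k] by simp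
  also have "\<dots> = (\<Sum>i\<in>nbhd N nv n. \<Sum>x\<in>?X. \<pi> x * T (x i) k) / real (card (nbhd N nv n))"
    unfolding local_trans_def by (subst sum.swap) (simp add: sum_divide_distrib sum_distrib_left)
  also have "\<dots> = (\<Sum>i\<in>nbhd N nv n. \<Sum>j\<in>{1..K}. marginal N K \<pi> i j * T j k) / real (card (nbhd N nv n))"
  proof -
    have "(\<Sum>x\<in>?X. \<pi> x * T (x i) k) = (\<Sum>j\<in>{1..K}. marginal N K \<pi> i j * T j k)"
      if "i \<in> nbhd N nv n" for i
    proof -
      have "i \<in> {1..N}" using nbhd_subset[OF assms(1)] that by blast
      then show ?thesis
        by (subst sum_config_space_by_coordinate) (auto simp: marginal_def sum_distrib_right intro!: sum.cong)
    qed
    then show ?thesis by simp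
  qed
  finally show ?thesis .
qed

lemma sum_abs_mat_pow_on_le_average:
  fixes d :: "'i \<Rightarrow> 's \<Rightarrow> real"
  assumes fin: "finite S"
    and avg: "\<And>j. j \<in> S \<Longrightarrow> d n j = (\<Sum>i\<in>V. \<Sum>l\<in>S. d i l * T l j) / real (card V)"
  shows "(\<Sum>k\<in>S. \<bar>\<Sum>j\<in>S. d n j * mat_pow_on S T s j k\<bar>)
           \<le> (\<Sum>i\<in>V. \<Sum>k\<in>S. \<bar>\<Sum>j\<in>S. d i j * mat_pow_on S T (Suc s) j k\<bar>) / real (card V)"
proof -
  have avg_pow: "(\<Sum>j\<in>S. d n j * mat_pow_on S T s j k)
      = (\<Sum>i\<in>V. \<Sum>j\<in>S. d i j * mat_pow_on S T (Suc s) j k) / real (card V)" if k: "k \<in> S" for k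
  proof -
    have "(\<Sum>j\<in>S. d n j * mat_pow_on S T s j k)
        = (\<Sum>i\<in>V. \<Sum>l\<in>S. d i l * (\<Sum>j\<in>S. T l j * mat_pow_on S T s j k)) / real (card V)"
      using avg
      by (simp add: sum_divide_distrib sum_distrib_left sum_distrib_right mult_ac)
        (subst sum.swap, subst (2) sum.swap, simp)
    also have "\<dots> = (\<Sum>i\<in>V. \<Sum>j\<in>S. d i j * mat_pow_on S T (Suc s) j k) / real (card V)"
      using mat_pow_on_Suc_left[OF fin _ k] by simp
    finally show ?thesis .
  qed
  have "(\<Sum>k\<in>S. \<bar>\<Sum>j\<in>S. d n j * mat_pow_on S T s j k\<bar>)
      = (\<Sum>k\<in>S. \<bar>\<Sum>i\<in>V. \<Sum>j\<in>S. d i j * mat_pow_on S T (Suc s) j k\<bar>) / real (card V)"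
    unfolding sum_divide_distrib
    by (rule sum.cong[OF refl]) (simp del: mat_pow_on.simps add: avg_pow abs_divide)
  also have "\<dots> \<le> (\<Sum>k\<in>S. \<Sum>i\<in>V. \<bar>\<Sum>j\<in>S. d i j * mat_pow_on S T (Suc s) j k\<bar>) / real (card V)"
    by (intro divide_right_mono sum_mono sum_abs) simp
  also have "\<dots> = (\<Sum>i\<in>V. \<Sum>k\<in>S. \<bar>\<Sum>j\<in>S. d i j * mat_pow_on S T (Suc s) j k\<bar>) / real (card V)"
    by (subst sum.swap) (rule refl)
  finally show ?thesis .
qed

lemma eq_0_if_neighbourhood_average:
  fixes d :: "'i \<Rightarrow> 's \<Rightarrow> real"
  assumes fin: "finite I" "finite S" and contr: "l1_contraction S (mat_pow_on S T m) c"
    and c: "0 \<le> c" "c < 1"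
    and V: "\<And>n. n \<in> I \<Longrightarrow> V n \<subseteq> I \<and> finite (V n) \<and> V n \<noteq> {}"
    and sum_0: "\<And>n. n \<in> I \<Longrightarrow> (\<Sum>k\<in>S. d n k) = 0"
    and avg: "\<And>n k. n \<in> I \<Longrightarrow> k \<in> S \<Longrightarrow> d n k = (\<Sum>i\<in>V n. \<Sum>j\<in>S. d i j * T j k) / real (card (V n))"
    and n: "n \<in> I" and k: "k \<in> S"
  shows "d n k = 0"
proof -
  define g where "g i s = (\<Sum>k\<in>S. \<bar>\<Sum>j\<in>S. d i j * mat_pow_on S T s j k\<bar>)" for i s
  define G where "G s = Max ((\<lambda>i. g i s) ` I)" for s
  have g_le_G: "g i s \<le> G s" if "i \<in> I" for i s
    unfolding G_def using fin(1) that by (intro Max_ge) auto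
  have G_le: "G s \<le> b" if "\<And>i. i \<in> I \<Longrightarrow> g i s \<le> b" for s b
    unfolding G_def using fin(1) n that by (intro Max.boundedI) auto
  have g_0: "g i 0 = (\<Sum>k\<in>S. \<bar>d i k\<bar>)" for i
    unfolding g_def using fin(2) by (intro sum.cong refl) (simp add: of_bool_def[symmetric])
  have "G s \<le> G (Suc s)" for s
  proof (rule G_le)
    fix i assume i: "i \<in> I"
    have "g i s \<le> (\<Sum>l\<in>V i. g l (Suc s)) / real (card (V i))"
      unfolding g_def by (rule sum_abs_mat_pow_on_le_average[OF fin(2) avg[OF i]])
    also have "\<dots> \<le> (\<Sum>l\<in>V i. G (Suc s)) / real (card (V i))"
      using V[OF i] g_le_G by (intro divide_right_mono sum_mono) auto
    also have "\<dots> = G (Suc s)" using V[OF i] by simp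
    finally show "g i s \<le> G (Suc s)" .
  qed
  then have "G 0 \<le> G m" by (rule lift_Suc_mono_le) simp
  also have "G m \<le> c * G 0"
  proof (rule G_le)
    fix i assume i: "i \<in> I"
    have "g i m \<le> c * g i 0"
      unfolding g_def[of i m] g_0 using contr sum_0[OF i] unfolding l1_contraction_def by blast
    also have "\<dots> \<le> c * G 0" using g_le_G[OF i] c(1) by (rule mult_left_mono)
    finally show "g i m \<le> c * G 0" .
  qed
  finally have "G 0 \<le> c * G 0" .
  moreover have "0 \<le> g n 0" unfolding g_def by (simp add: sum_nonneg)
  ultimately have "G 0 = 0" using g_le_G[OF n, of 0] c(2) nonneg_le_mult_imp_eq_0 by force
  then have "(\<Sum>k\<in>S. \<bar>d n k\<bar>) = 0"
    using g_le_G[OF n, of 0] unfolding g_0 by (simp add: sum_nonneg order.antisym)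
  then show ?thesis using fin(2) k by (simp add: sum_nonneg_eq_0_iff)
qed

lemma sum_marginal_eq_1:
  assumes "(\<Sum>x\<in>config_space N K. \<pi> x) = 1" "i \<in> {1..N}"
  shows "(\<Sum>j\<in>{1..K}. marginal N K \<pi> i j) = 1"
  using sum_config_space_by_coordinate[OF assms(2), of \<pi> K] assms(1) by (simp add: marginal_def)

lemma marginal_eq_invariant_measure:
  assumes N: "N \<ge> 1" and rs: "row_stochastic K T" and prim: "primitive_on {1..K} T"
    and \<pi>: "invariant_measure (config_space N K) (global_trans N nv T) \<pi>"
    and \<pi>': "invariant_measure {1..K} T \<pi>'"
    and n: "n \<in> {1..N}" and k: "k \<in> {1..K}"
  shows "marginal N K \<pi> n k = \<pi>' k"
proof -
  have "{1..K} \<noteq> {}" using k by blast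
  then obtain m c where c: "0 \<le> c" "c < 1" and contr: "l1_contraction {1..K} (mat_pow_on {1..K} T m) c"
    by (rule l1_contraction_if_primitive_on[OF finite_atLeastAtMost _ stochastic_on_if_row_stochastic[OF rs] prim])
  define d where "d i j = marginal N K \<pi> i j - \<pi>' j" for i j
  have "d n k = 0"
  proof (rule eq_0_if_neighbourhood_average[OF finite_atLeastAtMost finite_atLeastAtMost contr c _ _ _ n k])
    show "nbhd N nv i \<subseteq> {1..N} \<and> finite (nbhd N nv i) \<and> nbhd N nv i \<noteq> {}" if "i \<in> {1..N}" for i
      using nbhd_subset[OF N] finite_nbhd[OF N] self_mem_nbhd[OF that] by blast
    show "(\<Sum>j\<in>{1..K}. d i j) = 0" if "i \<in> {1..N}" for i
      using sum_marginal_eq_1[OF invariant_measureD(3)[OF \<pi>] that] invariant_measureD(3)[OF \<pi>']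
      by (simp add: d_def sum_subtractf)
    show "d i j = (\<Sum>l\<in>nbhd N nv i. \<Sum>j'\<in>{1..K}. d l j' * T j' j) / real (card (nbhd N nv i))"
      if "i \<in> {1..N}" "j \<in> {1..K}" for i j
      using marginal_invariant_measure[OF N rs \<pi> that] invariant_measureD(4)[OF \<pi>' that(2)]
        card_nbhd_pos[OF that(1)]
      by (simp add: d_def left_diff_distrib sum_subtractf diff_divide_distrib)
  qed
  then show ?thesis by (simp add: d_def)
qed

lemma primitive_on_if_row_stochastic_irreducible_aperiodic:
  assumes "row_stochastic K T" "irreducible_mat K T" "aperiodic_mat K T"
  shows "primitive_on {1..K} T"
  using assms(2,3)
  unfolding irreducible_mat_def aperiodic_mat_def period_of_def mat_pow_eq_mat_pow_on
  by (intro primitive_on_if_irreducible_aperiodic stochastic_on_if_row_stochastic assms(1)) auto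

theorem theorem3p2:
  fixes N K nv :: nat
  assumes "N \<ge> 1" and "K \<ge> 1"
  shows "(\<forall>T1 T2.
            row_stochastic K T1 \<and> irreducible_mat K T1 \<and> aperiodic_mat K T1 \<and>
            row_stochastic K T2 \<and> irreducible_mat K T2 \<and> aperiodic_mat K T2 \<and>
            (\<forall>x\<in>config_space N K. \<forall>y\<in>config_space N K.
                global_trans N nv T1 x y = global_trans N nv T2 x y)
            \<longrightarrow> (\<forall>i\<in>{1..K}. \<forall>j\<in>{1..K}. T1 i j = T2 i j))
       \<and> (\<forall>T. row_stochastic K T \<and> irreducible_mat K T \<and> aperiodic_mat K T \<longrightarrow>
            (\<exists>!\<pi>. invariant_measure (config_space N K) (global_trans N nv T) \<pi>) \<and>
            (\<exists>!\<pi>'. invariant_measure {1..K} T \<pi>') \<and>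
            (\<forall>\<pi> \<pi>'. invariant_measure (config_space N K) (global_trans N nv T) \<pi> \<and>
                      invariant_measure {1..K} T \<pi>' \<longrightarrow>
                      (\<forall>n\<in>{1..N}. \<forall>k\<in>{1..K}. marginal N K \<pi> n k = \<pi>' k)))"
proof (intro conjI allI impI)
  fix T1 T2 :: "nat \<Rightarrow> nat \<Rightarrow> real"
  assume "row_stochastic K T1 \<and> irreducible_mat K T1 \<and> aperiodic_mat K T1 \<and>
    row_stochastic K T2 \<and> irreducible_mat K T2 \<and> aperiodic_mat K T2 \<and>
    (\<forall>x\<in>config_space N K. \<forall>y\<in>config_space N K. global_trans N nv T1 x y = global_trans N nv T2 x y)"
  then show "\<forall>i\<in>{1..K}. \<forall>j\<in>{1..K}. T1 i j = T2 i j"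
    using row_stochastic_eq_if_global_trans_eq[OF assms(1)] by blast
next
  fix T :: "nat \<Rightarrow> nat \<Rightarrow> real"
  assume "row_stochastic K T \<and> irreducible_mat K T \<and> aperiodic_mat K T"
  then have rs: "row_stochastic K T" and prim: "primitive_on {1..K} T"
    using primitive_on_if_row_stochastic_irreducible_aperiodic by blast+
  show "\<exists>!\<pi>. invariant_measure (config_space N K) (global_trans N nv T) \<pi>"
    using finite_config_space config_space_nonempty[OF assms(2)] stochastic_on_global_trans[OF assms(1) rs]
      primitive_on_global_trans[OF assms(1) rs prim]
    by (rule ex1_invariant_measure_if_primitive_on)
  show "\<exists>!\<pi>'. invariant_measure {1..K} T \<pi>'"
    using assms(2) stochastic_on_if_row_stochastic[OF rs] prim
    by (intro ex1_invariant_measure_if_primitive_on) auto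
  show "\<forall>n\<in>{1..N}. \<forall>k\<in>{1..K}. marginal N K \<pi> n k = \<pi>' k"
    if "invariant_measure (config_space N K) (global_trans N nv T) \<pi> \<and> invariant_measure {1..K} T \<pi>'"
    for \<pi> \<pi>'
    using marginal_eq_invariant_measure[OF assms(1) rs prim] that by blast
qed

end
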